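(* Let $f:\mathbb{R}^n\to\mathbb{R}$ be strongly convex with constant $\mu\ge0$, and let $\gamma_k>0$, $\delta_k>0$, $s_k>0$ for all $k$. Then the iterates of the random incremental penalty method surely satisfy, for all $y\in X$ and $k\ge1$, $$\|x_{k+1}-y\|^2\le(1-\mu s_k)\|x_k-y\|^2+2s_k\big(f(y)-f(x_k)\big)+\frac{s_k\gamma_k\delta_k}{2\alpha_{\min}}-2s_k\gamma_k\,\mathrm{dist}(x_k,X_{i_k})+s_k^2\big(\|\tilde\nabla f(x_k)\|+\gamma_k\big)^2.$$
   Context: Let $a_1,\dots,a_m\in\mathbb{R}^n$ be nonzero vectors and $b_1,\dots,b_m\in\mathbb{R}$; $X_i=\{x:\langle a_i,x\rangle-b_i\le0\}$, $X=\bigcap_{i=1}^mX_i$ (assumed nonempty), $\alpha_{\min}=\min_i\|a_i\|$. Strong convexity with constant $\mu\ge0$ means $f(u)\ge f(v)+\langle g,u-v\rangle+\frac{\mu}{2}\|u-v\|^2$ for all $u,v$ and all $g\in\partial f(v)$ ($\mu=0$: convex). For $\delta>0$, nonzero $a$ and scalar $b$: $h_\delta(x;a,b)=\frac{\langle a,x\rangle-b}{\|a\|}$ if $\langle a,x\rangle-b>\delta$, $\frac{(\langle a,x\rangle-b+\delta)^2}{4\delta\|a\|}$ if $-\delta\le\langle a,x\rangle-b\le\delta$, $0$ if $\langle a,x\rangle-b<-\delta$; its gradient is $\nabla h_\delta(x;a,b)=\frac{1}{\|a\|}p'_\delta(\langle a,x\rangle-b)\,a$ with $p'_\delta(s)=1$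 for $s>\delta$, $\frac{s+\delta}{2\delta}$ for $|s|\le\delta$, $0$ for $s<-\delta$. Random incremental penalty method: from an initial point $x_1$, for $k\ge1$, $x_{k+1}=x_k-s_k\big[\tilde\nabla f(x_k)+\gamma_k\nabla h_{\delta_k}(x_k;a_{i_k},b_{i_k})\big]$, where $\tilde\nabla f(x_k)\in\partial f(x_k)$ and $i_k\in\{1,\dots,m\}$ is chosen uniformly at random. *)

theory Defs
  imports "HOL-Analysis.Analysis"
begin

definition subdiff :: "('a::euclidean_space \<Rightarrow> real) \<Rightarrow> 'a \<Rightarrow> 'a set" where
  "subdiff f v = {g. \<forall>u. f u \<ge> f v + inner g (u - v)}"

definition strongly_convex :: "('a::euclidean_space \<Rightarrow> real) \<Rightarrow> real \<Rightarrow> bool" where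
  "strongly_convex f \<mu> \<longleftrightarrow>
     (\<forall>u v g. g \<in> subdiff f v \<longrightarrow> f u \<ge> f v + inner g (u - v) + \<mu> / 2 * (norm (u - v))^2)"

definition h_pen :: "real \<Rightarrow> 'a::euclidean_space \<Rightarrow> 'a \<Rightarrow> real \<Rightarrow> real" where
  "h_pen \<delta> x a b =
     (let s = inner a x - b in
      if s > \<delta> then s / norm a
      else if -\<delta> \<le> s then (s + \<delta>)^2 / (4 * \<delta> * norm a)
      else 0)"

definition p_pen' :: "real \<Rightarrow> real \<Rightarrow> real" where
  "p_pen' \<delta> s = (if s > \<delta> then 1 else if -\<delta> \<le> s then (s + \<delta>) / (2 * \<delta>) else 0)"

definition grad_h_pen :: "real \<Rightarrow> 'a::euclidean_space \<Rightarrow> 'a \<Rightarrow> real \<Rightarrow> 'a" where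
  "grad_h_pen \<delta> x a b = (p_pen' \<delta> (inner a x - b) / norm a) *\<^sub>R a"

end

theory Submission
  imports Defs
begin

text \<open>Write the step as \<open>x\<^sub>k\<^sub>+\<^sub>1 = x\<^sub>k - s\<^sub>k e\<^sub>k\<close> with \<open>e\<^sub>k = g\<^sub>k + \<gamma>\<^sub>k \<nabla>h\<^sub>\<delta>(x\<^sub>k)\<close> and expand
  \<open>\<parallel>x\<^sub>k\<^sub>+\<^sub>1 - y\<parallel>\<^sup>2\<close>. In the cross term, strong convexity bounds \<open>\<langle>g\<^sub>k, x\<^sub>k - y\<rangle>\<close>; for the
  penalty part, \<open>y \<in> X\<^sub>i\<^sub>k\<close> gives \<open>\<langle>\<nabla>h\<^sub>\<delta>(x\<^sub>k), x\<^sub>k - y\<rangle> \<ge> p'\<^sub>\<delta>(t) t / \<parallel>a\<parallel>\<close> with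
  \<open>t = \<langle>a, x\<^sub>k\<rangle> - b\<close>, and \<open>p'\<^sub>\<delta>(t) t \<ge> max t 0 - \<delta>/4\<close>, where \<open>max t 0 / \<parallel>a\<parallel>\<close> dominates the
  distance from \<open>x\<^sub>k\<close> to the half-space. The quadratic term only needs
  \<open>\<parallel>\<nabla>h\<^sub>\<delta>\<parallel> = p'\<^sub>\<delta> \<le> 1\<close>.\<close>

lemma p_pen'_nonneg: "0 < d \<Longrightarrow> 0 \<le> p_pen' d t"
  by (simp add: p_pen'_def)

lemma p_pen'_le_one: "0 < d \<Longrightarrow> p_pen' d t \<le> 1"
  by (simp add: p_pen'_def)

lemma p_pen'_mult_ge:
  fixes d t :: real
  assumes "0 < d"
  shows "max t 0 - d / 4 \<le> p_pen' d t * t"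
proof (cases "-d \<le> t \<and> t \<le> d")
  case True
  have "max t 0 - d / 4 \<le> (t + d) * t / (2 * d)"
  proof -
    have "2 * d * (max t 0 - d / 4) \<le> (t + d) * t"
      using sum_power2_ge_zero[of "t - d / 2" "d / 2"] sum_power2_ge_zero[of "t + d / 2" "d / 2"]
      by (cases "0 \<le> t") (auto simp: power2_eq_square algebra_simps)
    then show ?thesis
      using assms by (simp add: field_simps)
  qed
  then show ?thesis
    using True by (simp add: p_pen'_def)
next
  case False
  then show ?thesis
    using assms by (auto simp: p_pen'_def)
qed

lemma norm_grad_h_pen:
  assumes "a \<noteq> 0" "0 < d"
  shows "norm (grad_h_pen d x a b) = p_pen' d (inner a x - b)"
  using assms p_pen'_nonneg by (simp add: grad_h_pen_def)

lemma infdist_halfspace_le: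
  fixes a x :: "'a::euclidean_space"
  assumes "a \<noteq> 0"
  shows "infdist x {z. inner a z - b \<le> 0} \<le> max (inner a x - b) 0 / norm a"
proof (cases "inner a x - b \<le> 0")
  case True
  then show ?thesis
    by (simp add: infdist_zero)
next
  case False
  define t where "t = inner a x - b"
  define z where "z = x - (t / (norm a)\<^sup>2) *\<^sub>R a"
  have "inner a z - b = 0"
    using assms unfolding z_def t_def
    by (simp add: inner_diff_right power2_norm_eq_inner[symmetric] field_simps)
  then have "z \<in> {z. inner a z - b \<le> 0}"
    by simp
  moreover have "dist x z = t / norm a"
    using assms False unfolding z_def t_def by (simp add: dist_norm power2_eq_square)
  ultimately show ?thesis
    using infdist_le[of z _ x] False t_def by simp
qed

lemma inner_grad_h_pen_ge:
  fixes a x y :: "'a::euclidean_space"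
  assumes "a \<noteq> 0" "0 < d" "inner a y - b \<le> 0"
  shows "infdist x {z. inner a z - b \<le> 0} - d / (4 * norm a)
           \<le> inner (grad_h_pen d x a b) (x - y)"
proof -
  define t where "t = inner a x - b"
  define p where "p = p_pen' d t"
  have "infdist x {z. inner a z - b \<le> 0} - d / (4 * norm a) \<le> (max t 0 - d / 4) / norm a"
    using infdist_halfspace_le[OF assms(1), of x b]
    by (simp add: t_def diff_divide_distrib)
  also have "\<dots> \<le> p * t / norm a"
    using p_pen'_mult_ge[OF assms(2)] by (simp add: p_def divide_right_mono)
  also have "\<dots> \<le> p * (inner a x - inner a y) / norm a"
    using assms(3) p_pen'_nonneg[OF assms(2)]
    by (intro divide_right_mono mult_left_mono) (auto simp: p_def t_def)
  also have "\<dots> = inner (grad_h_pen d x a b) (x - y)"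
    by (simp add: grad_h_pen_def p_def t_def inner_diff_right right_diff_distrib diff_divide_distrib)
  finally show ?thesis .
qed

lemma strongly_convex_inner_subgradient_ge:
  assumes "strongly_convex f \<mu>" "g \<in> subdiff f v"
  shows "f v - f u + \<mu> / 2 * (norm (v - u))\<^sup>2 \<le> inner g (v - u)"
proof -
  have "f v + inner g (u - v) + \<mu> / 2 * (norm (u - v))\<^sup>2 \<le> f u"
    using assms unfolding strongly_convex_def by blast
  then show ?thesis
    by (simp add: inner_diff_right norm_minus_commute)
qed

lemma norm_diff_scaleR_square:
  fixes u d :: "'a::real_inner"
  shows "(norm (u - s *\<^sub>R d))\<^sup>2 = (norm u)\<^sup>2 - 2 * s * inner d u + s\<^sup>2 * (norm d)\<^sup>2"
  unfolding power2_norm_eq_inner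
  by (simp add: inner_diff_left inner_diff_right inner_commute algebra_simps power2_eq_square)

lemma penalized_subgradient_step:
  fixes f :: "'a::euclidean_space \<Rightarrow> real"
  assumes sc: "strongly_convex f \<mu>" and subg: "g \<in> subdiff f x"
    and a: "a \<noteq> 0" and pos: "0 < \<gamma>" "0 < d" "0 < s"
    and \<alpha>: "0 < \<alpha>" "\<alpha> \<le> norm a"
    and y: "inner a y - b \<le> 0"
  shows "(norm (x - s *\<^sub>R (g + \<gamma> *\<^sub>R grad_h_pen d x a b) - y))\<^sup>2
    \<le> (1 - \<mu> * s) * (norm (x - y))\<^sup>2 + 2 * s * (f y - f x)
       + s * \<gamma> * d / (2 * \<alpha>)
       - 2 * s * \<gamma> * infdist x {z. inner a z - b \<le> 0}
       + s\<^sup>2 * (norm g + \<gamma>)\<^sup>2"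
proof -
  define G where "G = grad_h_pen d x a b"
  define D where "D = infdist x {z. inner a z - b \<le> 0}"
  define N where "N = (norm (x - y))\<^sup>2"
  have conv: "f x - f y + \<mu> / 2 * N \<le> inner g (x - y)"
    using strongly_convex_inner_subgradient_ge[OF sc subg] by (simp add: N_def)
  have "D - d / (4 * norm a) \<le> inner G (x - y)"
    using inner_grad_h_pen_ge[OF a pos(2) y] by (simp add: G_def D_def)
  moreover have "d / (4 * norm a) \<le> d / (4 * \<alpha>)"
    using \<alpha> pos by (simp add: frac_le)
  ultimately have pen: "D - d / (4 * \<alpha>) \<le> inner G (x - y)"
    by linarith
  have "norm (\<gamma> *\<^sub>R G) \<le> \<gamma>"
    using norm_grad_h_pen[OF a pos(2)] p_pen'_le_one[OF pos(2)] pos(1)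
    by (simp add: G_def mult_left_le)
  then have "norm (g + \<gamma> *\<^sub>R G) \<le> norm g + \<gamma>"
    using norm_triangle_ineq[of g "\<gamma> *\<^sub>R G"] by linarith
  then have quad: "s\<^sup>2 * (norm (g + \<gamma> *\<^sub>R G))\<^sup>2 \<le> s\<^sup>2 * (norm g + \<gamma>)\<^sup>2"
    by (simp add: mult_left_mono power_mono)
  have cross: "s * (f x - f y + \<mu> / 2 * N) + s * \<gamma> * (D - d / (4 * \<alpha>))
      \<le> s * inner (g + \<gamma> *\<^sub>R G) (x - y)"
    using mult_left_mono[OF conv, of s] mult_left_mono[OF pen, of "s * \<gamma>"] pos
    by (simp add: inner_add_left algebra_simps)
  have "(norm (x - s *\<^sub>R (g + \<gamma> *\<^sub>R G) - y))\<^sup>2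
      = N - 2 * (s * inner (g + \<gamma> *\<^sub>R G) (x - y)) + s\<^sup>2 * (norm (g + \<gamma> *\<^sub>R G))\<^sup>2"
    using norm_diff_scaleR_square[of "x - y" s "g + \<gamma> *\<^sub>R G"]
    by (simp add: N_def algebra_simps)
  also have "\<dots> \<le> N - 2 * (s * (f x - f y + \<mu> / 2 * N) + s * \<gamma> * (D - d / (4 * \<alpha>)))
      + s\<^sup>2 * (norm g + \<gamma>)\<^sup>2"
    using cross quad by (intro add_mono diff_left_mono) auto
  also have "\<dots> = (1 - \<mu> * s) * N + 2 * s * (f y - f x) + s * \<gamma> * d / (2 * \<alpha>)
      - 2 * s * \<gamma> * D + s\<^sup>2 * (norm g + \<gamma>)\<^sup>2"
    using \<alpha> by (simp add: field_simps)
  finally show ?thesis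
    by (simp add: G_def D_def N_def)
qed

theorem lemma8:
  fixes f :: "'a::euclidean_space \<Rightarrow> real"
    and m :: nat and a :: "nat \<Rightarrow> 'a" and b :: "nat \<Rightarrow> real"
    and \<mu> :: real and \<gamma> \<delta> s :: "nat \<Rightarrow> real"
    and x g :: "nat \<Rightarrow> 'a" and ii :: "nat \<Rightarrow> nat" and y :: 'a and k :: nat
  assumes a_nz: "\<forall>j\<in>{1..m}. a j \<noteq> 0"
    and X_ne: "{z. \<forall>j\<in>{1..m}. inner (a j) z - b j \<le> 0} \<noteq> {}"
    and mu: "\<mu> \<ge> 0"
    and sc: "strongly_convex f \<mu>"
    and pos: "\<forall>k\<ge>1. \<gamma> k > 0 \<and> \<delta> k > 0 \<and> s k > 0"
    and idx: "\<forall>k\<ge>1. ii k \<in> {1..m}"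
    and subg: "\<forall>k\<ge>1. g k \<in> subdiff f (x k)"
    and iter: "\<forall>k\<ge>1. x (Suc k) = x k - s k *\<^sub>R (g k + \<gamma> k *\<^sub>R grad_h_pen (\<delta> k) (x k) (a (ii k)) (b (ii k)))"
    and yX: "y \<in> {z. \<forall>j\<in>{1..m}. inner (a j) z - b j \<le> 0}"
    and k: "k \<ge> 1"
  shows "(norm (x (Suc k) - y))^2
    \<le> (1 - \<mu> * s k) * (norm (x k - y))^2 + 2 * s k * (f y - f (x k))
       + s k * \<gamma> k * \<delta> k / (2 * Min ((\<lambda>j. norm (a j)) ` {1..m}))
       - 2 * s k * \<gamma> k * infdist (x k) {z. inner (a (ii k)) z - b (ii k) \<le> 0}
       + (s k)^2 * (norm (g k) + \<gamma> k)^2"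
proof -
  txt \<open>The estimate is a per-step one.\<close>
  have ik: "ii k \<in> {1..m}"
    using idx k by auto
  have "Min ((\<lambda>j. norm (a j)) ` {1..m}) \<le> norm (a (ii k))"
    using ik by (intro Min_le) auto
  moreover have "0 < Min ((\<lambda>j. norm (a j)) ` {1..m})"
    using a_nz ik by (subst Min_gr_iff) auto
  ultimately show ?thesis
    using penalized_subgradient_step[OF sc, of "g k" "x k" "a (ii k)" "\<gamma> k" "\<delta> k" "s k"]
      a_nz ik pos subg yX iter k by auto
qed

end
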